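(* Every conserved interval $I$ of $\mathcal{P}$ admits a unique inclusion-maximal set of frontiers, denoted $F_I$. Moreover, every conserved interval $I$ of $\mathcal{P}$ with $|I|\geq 2$ satisfies one of the following: (1) $I$ is strong; (2) $I$ is weak and there exist a unique strong conserved interval $J$ of $\mathcal{P}$ and two elements $f_i,f_j\in F_J$ with $f_i<f_j$ such that $I=(f_i..f_j)$; moreover, in this case $F_I=F_J\cap I$ and $J=\mathrm{Container}(I)$.
   Context: Let $n\geq 2$ and let $\mathcal{P}=\{P_1,\ldots,P_K\}$ be signed permutations of $\{1,\ldots,n\}$: each $P_k$ is an ordering of $1,\ldots,n$ in which each element carries a sign $+$ or $-$. Assume $P_1=(+1,+2,\ldots,+n)$ and that every $P_k$ has first element $+1$ and last element $+n$. For integers $i\leq j$ write $(i..j)=\{i,\ldots,j\}$. A conserved interval of $\mathcal{P}$ is either a singleton, or a set $(a..c)$ with $a<c$ which (ignoring signs) occupies consecutive positions in every $P_k$ and which, in every $P_k$, has either $+a$ at its left end and $+c$ at its right end, or $-c$ at its left end and $-a$ at its right end. Two intervals $(i..j)$ and $(k..l)$ overlap if $i<k\leq j<l$ or $k<i\leq l<j$. A conserved interval is strong if it has at least two elements and overlaps no other conserved interval; otherwise it is weak. For a conserved interval $I=(a..c)$, a set $\{f_1,\ldots,f_k\}$ with $a=f_1<\cdots<f_k=c$ is a set of frontiers of $I$ if $(f_i..f_j)$ is a conserved interval for all $1\leq i<j\leq k$. For a conserved interval $I$, $\mathrm{Container}(I)$ is the smallest strong conserved interval containing $I$ (it exists since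 $(1..n)$ is strong). *)

theory Defs
  imports Main
begin

text \<open>A signed permutation of {1..n} is a list of nonzero integers: the entry x
  stands for the element |x| carrying sign + if x > 0 and sign - if x < 0.\<close>

definition signed_perm :: "nat \<Rightarrow> int list \<Rightarrow> bool" where
  "signed_perm n P \<longleftrightarrow> length P = n \<and> distinct (map abs P) \<and> abs ` set P = {1..int n}"

text \<open>A family is a list Ps of signed permutations, P_1 = hd Ps.\<close>

definition conserved :: "nat \<Rightarrow> int list list \<Rightarrow> int set \<Rightarrow> bool" where
  "conserved n Ps I \<longleftrightarrow>
     (\<exists>a. a \<in> {1..int n} \<and> I = {a}) \<or>
     (\<exists>a c. a < c \<and> I = {a..c} \<and>
        (\<forall>P\<in>set Ps. \<exists>s. (let w = take (nat (c - a) + 1) (drop s P) in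
            length w = nat (c - a) + 1 \<and> abs ` set w = {a..c} \<and>
            ((hd w = a \<and> last w = c) \<or> (hd w = - c \<and> last w = - a)))))"

definition overlap :: "int set \<Rightarrow> int set \<Rightarrow> bool" where
  "overlap I J \<longleftrightarrow> (\<exists>i j k l. i \<le> j \<and> k \<le> l \<and> I = {i..j} \<and> J = {k..l} \<and>
      ((i < k \<and> k \<le> j \<and> j < l) \<or> (k < i \<and> i \<le> l \<and> l < j)))"

definition strong :: "nat \<Rightarrow> int list list \<Rightarrow> int set \<Rightarrow> bool" where
  "strong n Ps I \<longleftrightarrow> conserved n Ps I \<and> card I \<ge> 2 \<and>
     \<not> (\<exists>J. conserved n Ps J \<and> overlap I J)"

definition weak :: "nat \<Rightarrow> int list list \<Rightarrow> int set \<Rightarrow> bool" where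
  "weak n Ps I \<longleftrightarrow> conserved n Ps I \<and> \<not> strong n Ps I"

definition frontiers :: "nat \<Rightarrow> int list list \<Rightarrow> int set \<Rightarrow> int set \<Rightarrow> bool" where
  "frontiers n Ps I F \<longleftrightarrow> finite F \<and> F \<noteq> {} \<and> I = {Min F..Max F} \<and>
     (\<forall>f\<in>F. \<forall>g\<in>F. f < g \<longrightarrow> conserved n Ps {f..g})"

definition max_frontiers :: "nat \<Rightarrow> int list list \<Rightarrow> int set \<Rightarrow> int set \<Rightarrow> bool" where
  "max_frontiers n Ps I F \<longleftrightarrow> frontiers n Ps I F \<and>
     \<not> (\<exists>F'. frontiers n Ps I F' \<and> F \<subset> F')"

definition FI :: "nat \<Rightarrow> int list list \<Rightarrow> int set \<Rightarrow> int set" where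
  "FI n Ps I = (THE F. max_frontiers n Ps I F)"

definition is_container :: "nat \<Rightarrow> int list list \<Rightarrow> int set \<Rightarrow> int set \<Rightarrow> bool" where
  "is_container n Ps I J \<longleftrightarrow> strong n Ps J \<and> I \<subseteq> J \<and>
     (\<forall>J'. strong n Ps J' \<and> I \<subseteq> J' \<longrightarrow> J \<subseteq> J')"

end

theory Submission
  imports Defs
begin

text \<open>
  Everything rests on three closure properties of conserved intervals, checked window by window
  in each signed permutation: if (a..b) and (b..c) are conserved then so is (a..c); if (a..b) and
  (a..c) are, then so is (b..c); and if (a..c) and (b..d) overlap with a < b \<le> c < d, then (a..b)
  and (c..d) are conserved. By the second property the frontiers of (a..c) are exactly a and
  those f for which (a..f) is conserved; this set is the unique maximal set of frontiers.
  Given a weak I = (a..c), take a widest conserved interval (u..v) having a and c among its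
  frontiers. A conserved interval overlapping (u..v) would, by the third and then the first
  property, yield a wider one, so (u..v) is strong. Any strong J \<supseteq> I is nested with (u..v) and
  contains it, for otherwise J would overlap (u..a) or (c..v). Hence (u..v) is the container of I, and it is
  the only strong interval having both ends of I as frontiers.
\<close>

definition window :: "int list \<Rightarrow> nat \<Rightarrow> nat \<Rightarrow> int \<Rightarrow> int \<Rightarrow> bool" where
  "window P s t a c \<longleftrightarrow> s \<le> t \<and> t < length P \<and> (\<lambda>i. \<bar>P!i\<bar>) ` {s..t} = {a..c}"

definition conserved_in :: "int list \<Rightarrow> int \<Rightarrow> int \<Rightarrow> bool" where
  "conserved_in P a c \<longleftrightarrow>
     (\<exists>s t. window P s t a c \<and> (P!s = a \<and> P!t = c \<or> P!s = -c \<and> P!t = -a))"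

definition conserved_pos_in :: "int list \<Rightarrow> int \<Rightarrow> int \<Rightarrow> bool" where
  "conserved_pos_in P a c \<longleftrightarrow> (\<exists>s t. window P s t a c \<and> P!s = a \<and> P!t = c)"

lemma set_take_drop:
  assumes "s + k \<le> length P"
  shows "set (take k (drop s P)) = (\<lambda>i. P!i) ` {s..<s+k}"
proof (intro equalityI subsetI)
  fix x assume "x \<in> set (take k (drop s P))"
  then obtain i where "i < k" "x = P!(s + i)" using assms by (auto simp: set_conv_nth)
  then show "x \<in> (\<lambda>i. P!i) ` {s..<s+k}" by auto
next
  fix x assume "x \<in> (\<lambda>i. P!i) ` {s..<s+k}"
  then obtain i where "s \<le> i" "i < s + k" "x = P!i" by auto
  then have "x = take k (drop s P) ! (i - s)" "i - s < length (take k (drop s P))"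
    using assms by auto
  then show "x \<in> set (take k (drop s P))" by (metis nth_mem)
qed

lemma hd_take_drop: "0 < k \<Longrightarrow> s < length P \<Longrightarrow> hd (take k (drop s P)) = P!s"
  by (simp add: hd_drop_conv_nth)

lemma last_take_drop: "0 < k \<Longrightarrow> s + k \<le> length P \<Longrightarrow> last (take k (drop s P)) = P!(s + k - 1)"
  by (simp add: last_conv_nth)

locale signed_seq =
  fixes P :: "int list"
  assumes distinct_abs: "distinct (map abs P)"
    and nonzero: "0 \<notin> set P"
begin

lemma abs_nth_inject: "i < length P \<Longrightarrow> j < length P \<Longrightarrow> \<bar>P!i\<bar> = \<bar>P!j\<bar> \<Longrightarrow> i = j"
  using distinct_abs by (metis distinct_conv_nth length_map nth_map)

lemma inj_on_abs_nth: "inj_on (\<lambda>i. \<bar>P!i\<bar>) {..<length P}"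
  by (auto simp: inj_on_def intro: abs_nth_inject)

lemma window_image_diff:
  "t < length P \<Longrightarrow> t' < length P \<Longrightarrow>
   (\<lambda>i. \<bar>P!i\<bar>) ` ({s..t} - {s'..t'}) = (\<lambda>i. \<bar>P!i\<bar>) ` {s..t} - (\<lambda>i. \<bar>P!i\<bar>) ` {s'..t'}"
  by (rule inj_on_image_set_diff[OF inj_on_abs_nth]) auto

lemma window_image_Int:
  "t < length P \<Longrightarrow> t' < length P \<Longrightarrow>
   (\<lambda>i. \<bar>P!i\<bar>) ` ({s..t} \<inter> {s'..t'}) = (\<lambda>i. \<bar>P!i\<bar>) ` {s..t} \<inter> (\<lambda>i. \<bar>P!i\<bar>) ` {s'..t'}"
  by (rule inj_on_image_Int[OF inj_on_abs_nth]) auto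

lemma window_min_pos:
  assumes "window P s t a c" shows "0 < a"
proof -
  have "\<bar>P!s\<bar> \<in> {a..c}" using assms by (auto simp: window_def)
  then have "a \<in> (\<lambda>i. \<bar>P!i\<bar>) ` {s..t}" using assms by (auto simp: window_def)
  then obtain i where "i \<le> t" "a = \<bar>P!i\<bar>" by auto
  moreover have "P!i \<noteq> 0" using nonzero \<open>i \<le> t\<close> assms by (metis nth_mem le_less_trans window_def)
  ultimately show ?thesis by simp
qed

lemma window_mem_iff:
  assumes "window P s t a c" "i < length P"
  shows "i \<in> {s..t} \<longleftrightarrow> \<bar>P!i\<bar> \<in> {a..c}"
proof
  assume "\<bar>P!i\<bar> \<in> {a..c}"
  then obtain j where "j \<in> {s..t}" "\<bar>P!j\<bar> = \<bar>P!i\<bar>" using assms(1) unfolding window_def by force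
  moreover have "j < length P" using \<open>j \<in> {s..t}\<close> assms(1) by (auto simp: window_def)
  ultimately show "i \<in> {s..t}" using abs_nth_inject assms(2) by metis
qed (use assms(1) in \<open>auto simp: window_def\<close>)

lemma window_length:
  assumes "window P s t a c"
  shows "t = s + nat (c - a)"
proof -
  have "inj_on (\<lambda>i. \<bar>P!i\<bar>) {s..t}"
    by (rule inj_on_subset[OF inj_on_abs_nth]) (use assms in \<open>auto simp: window_def\<close>)
  then have "card {s..t} = card {a..c}" using assms by (metis card_image window_def)
  then show ?thesis using assms by (auto simp: window_def)
qed

lemma conserved_in_iff_take_drop:
  assumes "a < c"
  shows "conserved_in P a c \<longleftrightarrow>
    (\<exists>s. let w = take (nat (c - a) + 1) (drop s P) in
       length w = nat (c - a) + 1 \<and> abs ` set w = {a..c} \<and>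
       (hd w = a \<and> last w = c \<or> hd w = - c \<and> last w = - a))" (is "_ \<longleftrightarrow> (\<exists>s. ?win s)")
proof -
  let ?k = "nat (c - a) + 1" and ?t = "\<lambda>s. s + nat (c - a)"
  have win: "?win s \<longleftrightarrow> window P s (?t s) a c \<and>
      (P!s = a \<and> P!(?t s) = c \<or> P!s = -c \<and> P!(?t s) = -a)" for s
  proof (cases "s + ?k \<le> length P")
    case True
    have "{s..?t s} = {s..<s + ?k}" by auto
    with True show ?thesis
      by (simp add: Let_def window_def set_take_drop image_image hd_take_drop last_take_drop
          del: hd_take)
  next
    case False
    then have "length (take ?k (drop s P)) \<noteq> ?k" by simp
    with False show ?thesis unfolding Let_def window_def by auto
  qed
  have "conserved_in P a c \<longleftrightarrow> (\<exists>s. window P s (?t s) a c \<and>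
      (P!s = a \<and> P!(?t s) = c \<or> P!s = -c \<and> P!(?t s) = -a))"
    unfolding conserved_in_def
  proof (intro iffI; elim exE)
    fix s t assume st: "window P s t a c \<and> (P!s = a \<and> P!t = c \<or> P!s = -c \<and> P!t = -a)"
    then have "t = ?t s" using window_length by blast
    with st show "\<exists>s. window P s (?t s) a c \<and> (P!s = a \<and> P!(?t s) = c \<or> P!s = -c \<and> P!(?t s) = -a)"
      by blast
  qed blast
  then show ?thesis using win by simp
qed

lemma opposite_entries_absurd:
  assumes "i < length P" "j < length P" "P!j = - P!i" shows False
proof -
  have "i = j" using abs_nth_inject[of i j] assms by simp
  then have "P!i = 0" using assms(3) by simp
  then show False using nonzero nth_mem[OF assms(1)] by simp
qed

lemma conserved_pos_in_trans:
  assumes "conserved_pos_in P a b" "conserved_in P b c" "a < b" "b < c"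
  shows "conserved_in P a c"
proof -
  obtain s1 t1 where w1: "window P s1 t1 a b" and e1: "P!s1 = a" "P!t1 = b"
    using assms(1) unfolding conserved_pos_in_def by blast
  obtain s2 t2 where w2: "window P s2 t2 b c" and e2: "P!s2 = b \<and> P!t2 = c \<or> P!s2 = -c \<and> P!t2 = -b"
    using assms(2) unfolding conserved_in_def by blast
  have r: "s1 \<le> t1" "t1 < length P" "s2 \<le> t2" "t2 < length P"
    and im: "(\<lambda>i. \<bar>P!i\<bar>) ` {s1..t1} = {a..b}" "(\<lambda>i. \<bar>P!i\<bar>) ` {s2..t2} = {b..c}"
    using w1 w2 by (auto simp: window_def)
  have "P!t2 \<noteq> -b" using opposite_entries_absurd[OF r(2,4)] e1(2) by auto
  then have "P!s2 = b" "P!t2 = c" using e2 by auto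
  then have "s2 = t1" using abs_nth_inject[of s2 t1] e1 r by auto
  then have "(\<lambda>i. \<bar>P!i\<bar>) ` {s1..t2} = {a..b} \<union> {b..c}"
  proof -
    have "{s1..t2} = {s1..t1} \<union> {t1..t2}" using r \<open>s2 = t1\<close> by auto
    then show ?thesis using im \<open>s2 = t1\<close> by (simp add: image_Un)
  qed
  also have "\<dots> = {a..c}" using assms(3,4) by auto
  finally show ?thesis
    unfolding conserved_in_def window_def using r \<open>s2 = t1\<close> e1 \<open>P!t2 = c\<close>
    by (intro exI[of _ s1] exI[of _ t2]) auto
qed

lemma conserved_pos_in_suffix:
  assumes "conserved_pos_in P a b" "conserved_in P a c" "a < b" "b < c"
  shows "conserved_in P b c"
proof -
  obtain s1 t1 where w1: "window P s1 t1 a b" and e1: "P!s1 = a" "P!t1 = b"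
    using assms(1) unfolding conserved_pos_in_def by blast
  obtain s2 t2 where w2: "window P s2 t2 a c" and e2: "P!s2 = a \<and> P!t2 = c \<or> P!s2 = -c \<and> P!t2 = -a"
    using assms(2) unfolding conserved_in_def by blast
  have r: "s1 \<le> t1" "t1 < length P" "s2 \<le> t2" "t2 < length P"
    and im: "(\<lambda>i. \<bar>P!i\<bar>) ` {s1..t1} = {a..b}" "(\<lambda>i. \<bar>P!i\<bar>) ` {s2..t2} = {a..c}"
    using w1 w2 by (auto simp: window_def)
  have "P!t2 \<noteq> -a" using opposite_entries_absurd[OF _ r(4), of s1] r(1,2) e1(1) by auto
  then have "P!s2 = a" "P!t2 = c" using e2 by auto
  then have "s2 = s1" using abs_nth_inject[of s2 s1] e1 r by auto
  have "t1 < t2"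
  proof (rule ccontr)
    assume "\<not> t1 < t2"
    then have "{s2..t2} \<subseteq> {s1..t1}" using \<open>s2 = s1\<close> by auto
    then have "{a..c} \<subseteq> {a..b}" using im by (metis image_mono)
    then show False using assms(3,4) by auto
  qed
  have "{t1..t2} = ({s2..t2} - {s1..t1}) \<union> {t1}" using r \<open>s2 = s1\<close> \<open>t1 < t2\<close> by auto
  then have "(\<lambda>i. \<bar>P!i\<bar>) ` {t1..t2} = ({a..c} - {a..b}) \<union> {b}"
    using im e1 window_image_diff[OF r(4,2), of s2 s1] \<open>s2 = s1\<close> window_min_pos[OF w1] assms(3)
    by (simp add: image_Un)
  also have "\<dots> = {b..c}" using assms(3,4) by auto
  finally show ?thesis
    unfolding conserved_in_def window_def using r e1 \<open>P!t2 = c\<close> \<open>t1 < t2\<close>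
    by (intro exI[of _ t1] exI[of _ t2]) auto
qed

lemma conserved_pos_in_overlap:
  assumes "conserved_pos_in P a c" "conserved_in P b d" "a < b" "b \<le> c" "c < d"
  shows "conserved_in P a b \<and> conserved_in P c d"
proof -
  obtain s1 t1 where w1: "window P s1 t1 a c" and e1: "P!s1 = a" "P!t1 = c"
    using assms(1) unfolding conserved_pos_in_def by blast
  obtain s2 t2 where w2: "window P s2 t2 b d" and e2: "P!s2 = b \<and> P!t2 = d \<or> P!s2 = -d \<and> P!t2 = -b"
    using assms(2) unfolding conserved_in_def by blast
  have r: "s1 \<le> t1" "t1 < length P" "s2 \<le> t2" "t2 < length P"
    and im: "(\<lambda>i. \<bar>P!i\<bar>) ` {s1..t1} = {a..c}" "(\<lambda>i. \<bar>P!i\<bar>) ` {s2..t2} = {b..d}"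
    using w1 w2 by (auto simp: window_def)
  have "0 < a" using window_min_pos[OF w1] .
  have "t1 \<in> {s2..t2}" "s1 \<notin> {s2..t2}"
    using window_mem_iff[OF w2] r e1 \<open>0 < a\<close> assms(3-5) by auto
  then have "s1 < s2" using r(1) by auto
  have "d \<in> (\<lambda>i. \<bar>P!i\<bar>) ` {s2..t2}" using im(2) assms(4,5) by simp
  then obtain j where j: "j \<in> {s2..t2}" "\<bar>P!j\<bar> = d" by blast
  then have "j \<notin> {s1..t1}" using window_mem_iff[OF w1, of j] r assms(5) by auto
  then have "t1 < t2" using j \<open>s1 < s2\<close> by auto
  have "s2 \<in> {s1..t1}" using \<open>s1 < s2\<close> \<open>t1 \<in> {s2..t2}\<close> by auto
  then have "\<bar>P!s2\<bar> \<noteq> d" using window_mem_iff[OF w1, of s2] r assms(5) by auto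
  then have e2': "P!s2 = b" "P!t2 = d" using e2 \<open>0 < a\<close> assms(3-5) by auto
  have "(\<lambda>i. \<bar>P!i\<bar>) ` {s2..t1} = {b..c}"
  proof -
    have "{s2..t1} = {s1..t1} \<inter> {s2..t2}" using \<open>s1 < s2\<close> \<open>t1 < t2\<close> by auto
    then show ?thesis using window_image_Int[OF r(2,4), of s1 s2] im assms(3-5) by auto
  qed
  note im' = this window_image_diff[OF r(2,2), of s1 s2] window_image_diff[OF r(4,2), of s2 s2]
  have "{s1..s2} = ({s1..t1} - {s2..t1}) \<union> {s2}" using \<open>s1 < s2\<close> \<open>s2 \<in> {s1..t1}\<close> by auto
  then have "(\<lambda>i. \<bar>P!i\<bar>) ` {s1..s2} = ({a..c} - {b..c}) \<union> {b}"
    using im im' e2' \<open>0 < a\<close> assms(3) by (simp add: image_Un)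
  also have "\<dots> = {a..b}" using assms(3,4) by auto
  finally have "conserved_in P a b"
    unfolding conserved_in_def window_def using r e1 e2' \<open>s1 < s2\<close>
    by (intro exI[of _ s1] exI[of _ s2]) auto
  have "{t1..t2} = ({s2..t2} - {s2..t1}) \<union> {t1}" using \<open>t1 < t2\<close> \<open>t1 \<in> {s2..t2}\<close> by auto
  then have "(\<lambda>i. \<bar>P!i\<bar>) ` {t1..t2} = ({b..d} - {b..c}) \<union> {c}"
    using im im' e1 \<open>0 < a\<close> assms(3,4) by (simp add: image_Un)
  also have "\<dots> = {c..d}" using assms(4,5) by auto
  finally have "conserved_in P c d"
    unfolding conserved_in_def window_def using r e1 e2' \<open>t1 < t2\<close>
    by (intro exI[of _ t1] exI[of _ t2]) auto
  with \<open>conserved_in P a b\<close> show ?thesis ..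
qed

end

lemma signed_perm_signed_seq: "signed_perm n P \<Longrightarrow> signed_seq P"
  unfolding signed_perm_def signed_seq_def by force

definition mirror :: "int list \<Rightarrow> int list" where
  "mirror P = rev (map uminus P)"

lemma mirror_mirror [simp]: "mirror (mirror P) = P"
  by (simp add: mirror_def rev_map)

lemma length_mirror [simp]: "length (mirror P) = length P"
  by (simp add: mirror_def)

lemma nth_mirror: "i < length P \<Longrightarrow> mirror P ! i = - P ! (length P - Suc i)"
  by (simp add: mirror_def rev_nth)

lemma window_mirror:
  assumes "window P s t a c"
  shows "window (mirror P) (length P - Suc t) (length P - Suc s) a c"
proof -
  let ?L = "length P"
  have st: "s \<le> t" "t < ?L" using assms by (auto simp: window_def)
  have idx: "{?L - Suc t..?L - Suc s} = (\<lambda>j. ?L - Suc j) ` {s..t}"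
  proof (rule set_eqI, rule iffI)
    fix i assume "i \<in> {?L - Suc t..?L - Suc s}"
    then show "i \<in> (\<lambda>j. ?L - Suc j) ` {s..t}"
      using st by (intro image_eqI[of _ _ "?L - Suc i"]) auto
  qed (use st in auto)
  have "(\<lambda>i. \<bar>mirror P ! i\<bar>) ` {?L - Suc t..?L - Suc s} = (\<lambda>j. \<bar>P ! j\<bar>) ` {s..t}"
    unfolding idx image_image using st by (intro image_cong) (auto simp: nth_mirror)
  then show ?thesis using assms st by (auto simp: window_def)
qed

lemma conserved_in_mirrorI: "conserved_in P a c \<Longrightarrow> conserved_in (mirror P) a c"
proof -
  assume "conserved_in P a c"
  then obtain s t where w: "window P s t a c" and o: "P!s = a \<and> P!t = c \<or> P!s = -c \<and> P!t = -a"
    unfolding conserved_in_def by blast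
  have "s < length P" "t < length P" using w by (auto simp: window_def)
  then show ?thesis
    unfolding conserved_in_def using window_mirror[OF w] o
    by (intro exI[of _ "length P - Suc t"] exI[of _ "length P - Suc s"]) (auto simp: nth_mirror)
qed

lemma conserved_in_mirror [simp]: "conserved_in (mirror P) a c \<longleftrightarrow> conserved_in P a c"
  using conserved_in_mirrorI mirror_mirror by metis

lemma conserved_in_cases:
  assumes "conserved_in P a c"
  shows "conserved_pos_in P a c \<or> conserved_pos_in (mirror P) a c"
proof -
  obtain s t where w: "window P s t a c" and o: "P!s = a \<and> P!t = c \<or> P!s = -c \<and> P!t = -a"
    using assms unfolding conserved_in_def by blast
  have st: "s < length P" "t < length P" using w by (auto simp: window_def)
  from o show ?thesis
  proof
    assume "P!s = -c \<and> P!t = -a"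
    then have "conserved_pos_in (mirror P) a c"
      unfolding conserved_pos_in_def using window_mirror[OF w] st
      by (intro exI[of _ "length P - Suc t"] exI[of _ "length P - Suc s"]) (auto simp: nth_mirror)
    then show ?thesis ..
  qed (use w in \<open>auto simp: conserved_pos_in_def\<close>)
qed

lemma signed_seq_mirror: "signed_seq P \<Longrightarrow> signed_seq (mirror P)"
  by (force simp: signed_seq_def mirror_def rev_map[symmetric] distinct_map inj_on_def)

text \<open>Mirroring exchanges the two orientations of a conserved window, so the window arguments
  only need to treat a first window running from +a to +c.\<close>

lemma conserved_in_wlog_pos:
  assumes "signed_seq P" "conserved_in P a b"
    and "\<And>Q. signed_seq Q \<Longrightarrow> conserved_pos_in Q a b \<Longrightarrow> R Q"
    and "\<And>Q. R (mirror Q) \<Longrightarrow> R Q"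
  shows "R P"
  using conserved_in_cases[OF assms(2)] assms(1,3,4) signed_seq_mirror by blast

lemma conserved_in_trans:
  assumes "signed_seq P" "conserved_in P a b" "conserved_in P b c" "a < b" "b < c"
  shows "conserved_in P a c"
  using conserved_in_wlog_pos[OF assms(1,2), where R = "\<lambda>Q. conserved_in Q b c \<longrightarrow> conserved_in Q a c"]
    signed_seq.conserved_pos_in_trans assms(3-5) by simp

lemma conserved_in_suffix:
  assumes "signed_seq P" "conserved_in P a b" "conserved_in P a c" "a < b" "b < c"
  shows "conserved_in P b c"
  using conserved_in_wlog_pos[OF assms(1,2), where R = "\<lambda>Q. conserved_in Q a c \<longrightarrow> conserved_in Q b c"]
    signed_seq.conserved_pos_in_suffix assms(3-5) by simp

lemma conserved_in_overlap:
  assumes "signed_seq P" "conserved_in P a c" "conserved_in P b d" "a < b" "b \<le> c" "c < d"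
  shows "conserved_in P a b \<and> conserved_in P c d"
  using conserved_in_wlog_pos[OF assms(1,2),
      where R = "\<lambda>Q. conserved_in Q b d \<longrightarrow> conserved_in Q a b \<and> conserved_in Q c d"]
    signed_seq.conserved_pos_in_overlap assms(3-6) by simp

lemma conserved_interval:
  assumes "conserved n Ps I" shows "\<exists>a c. a \<le> c \<and> I = {a..c}"
proof -
  have "(\<exists>a. I = {a}) \<or> (\<exists>a c. a < c \<and> I = {a..c})"
    using assms unfolding conserved_def by (elim disjE exE conjE) blast+
  then show ?thesis by (metis atLeastAtMost_singleton less_imp_le order_refl)
qed

lemma conserved_nontrivial_interval:
  assumes "conserved n Ps J" "2 \<le> card J" shows "\<exists>p q. p < q \<and> J = {p..q}"
proof -
  obtain p q where pq: "p \<le> q" "J = {p..q}" using conserved_interval[OF assms(1)] by blast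
  with assms(2) have "p \<noteq> q" by auto
  with pq show ?thesis by (intro exI[of _ p] exI[of _ q]) auto
qed

lemma strong_interval: "strong n Ps J \<Longrightarrow> \<exists>p q. p < q \<and> J = {p..q}"
  unfolding strong_def using conserved_nontrivial_interval by blast

lemma overlap_intervals:
  "i \<le> j \<Longrightarrow> k \<le> l \<Longrightarrow>
   overlap {i..j} {k..l} \<longleftrightarrow> (i < k \<and> k \<le> j \<and> j < l) \<or> (k < i \<and> i \<le> l \<and> l < j)"
  unfolding overlap_def by (auto simp: Icc_eq_Icc)

lemma strong_nested:
  assumes "strong n Ps {p..q}" "conserved n Ps {p'..q'}" "p \<le> q" "p' \<le> q'"
    and "x \<in> {p..q}" "x \<in> {p'..q'}"
  shows "p \<le> p' \<and> q' \<le> q \<or> p' \<le> p \<and> q \<le> q'"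
proof -
  have "\<not> overlap {p..q} {p'..q'}" using assms(1,2) unfolding strong_def by blast
  then show ?thesis using overlap_intervals[OF assms(3,4)] assms(5,6) by auto
qed

lemma is_container_unique: "is_container n Ps I J \<Longrightarrow> is_container n Ps I J' \<Longrightarrow> J = J'"
  unfolding is_container_def by blast

abbreviation between_frontiers :: "nat \<Rightarrow> int list list \<Rightarrow> int set \<Rightarrow> int set \<Rightarrow> bool" where
  "between_frontiers n Ps J I \<equiv> \<exists>fi\<in>FI n Ps J. \<exists>fj\<in>FI n Ps J. fi < fj \<and> I = {fi..fj}"

definition frontier_set :: "nat \<Rightarrow> int list list \<Rightarrow> int \<Rightarrow> int \<Rightarrow> int set" where
  "frontier_set n Ps a c = {f \<in> {a..c}. f = a \<or> conserved n Ps {a..f}}"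

lemma frontiers_subset_frontier_set:
  assumes "frontiers n Ps {a..c} F" "a \<le> c"
  shows "F \<subseteq> frontier_set n Ps a c"
proof -
  have F: "finite F" "F \<noteq> {}" "{a..c} = {Min F..Max F}"
    and pw: "\<forall>f\<in>F. \<forall>g\<in>F. f < g \<longrightarrow> conserved n Ps {f..g}"
    using assms(1) unfolding frontiers_def by blast+
  then have "Min F = a" "Max F = c" using assms(2) by (auto simp: Icc_eq_Icc)
  then have "a \<in> F" "F \<subseteq> {a..c}" using Min_in[OF F(1,2)] Min_le[OF F(1)] Max_ge[OF F(1)] by auto
  show ?thesis
  proof
    fix f assume "f \<in> F"
    with \<open>F \<subseteq> {a..c}\<close> have "f \<in> {a..c}" by blast
    moreover have "f = a \<or> conserved n Ps {a..f}"
      using pw \<open>a \<in> F\<close> \<open>f \<in> F\<close> \<open>f \<in> {a..c}\<close> by (cases "f = a") auto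
    ultimately show "f \<in> frontier_set n Ps a c" unfolding frontier_set_def by blast
  qed
qed

lemma frontier_set_mono: "f \<in> frontier_set n Ps u v \<Longrightarrow> v \<le> l \<Longrightarrow> f \<in> frontier_set n Ps u l"
  by (auto simp: frontier_set_def)

locale perm_family =
  fixes n :: nat and Ps :: "int list list"
  assumes perms: "\<forall>P\<in>set Ps. signed_perm n P" and nonempty: "Ps \<noteq> []"
begin

lemma conserved_iff_conserved_in:
  assumes "a < c"
  shows "conserved n Ps {a..c} \<longleftrightarrow> (\<forall>P\<in>set Ps. conserved_in P a c)"
proof -
  have "\<not> (\<exists>x. {a..c} = {x})" using assms by (metis atLeastAtMost_singleton_iff not_less_iff_gr_or_eq)
  then have "conserved n Ps {a..c} \<longleftrightarrow> (\<forall>P\<in>set Ps. \<exists>s. let w = take (nat (c - a) + 1) (drop s P) in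
       length w = nat (c - a) + 1 \<and> abs ` set w = {a..c} \<and>
       (hd w = a \<and> last w = c \<or> hd w = - c \<and> last w = - a))"
    unfolding conserved_def using assms by (auto simp: Icc_eq_Icc)
  also have "\<dots> \<longleftrightarrow> (\<forall>P\<in>set Ps. conserved_in P a c)"
    using signed_seq.conserved_in_iff_take_drop[OF signed_perm_signed_seq assms] perms by blast
  finally show ?thesis .
qed

lemma signed_seq_member: "P \<in> set Ps \<Longrightarrow> signed_seq P"
  using perms signed_perm_signed_seq by blast

lemma conserved_trans:
  assumes "conserved n Ps {a..b}" "conserved n Ps {b..c}" "a < b" "b < c"
  shows "conserved n Ps {a..c}"
  unfolding conserved_iff_conserved_in[OF less_trans[OF assms(3,4)]]
proof
  fix P assume P: "P \<in> set Ps"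
  then have "conserved_in P a b" "conserved_in P b c"
    using assms conserved_iff_conserved_in by auto
  then show "conserved_in P a c" using conserved_in_trans[OF signed_seq_member[OF P]] assms(3,4) by blast
qed

lemma conserved_suffix:
  assumes "conserved n Ps {a..b}" "conserved n Ps {a..c}" "a < b" "b < c"
  shows "conserved n Ps {b..c}"
  unfolding conserved_iff_conserved_in[OF assms(4)]
proof
  fix P assume P: "P \<in> set Ps"
  then have "conserved_in P a b" "conserved_in P a c"
    using assms conserved_iff_conserved_in[OF less_trans[OF assms(3,4)]] conserved_iff_conserved_in by auto
  then show "conserved_in P b c" using conserved_in_suffix[OF signed_seq_member[OF P]] assms(3,4) by blast
qed

lemma conserved_overlap:
  assumes "conserved n Ps {a..c}" "conserved n Ps {b..d}" "a < b" "b \<le> c" "c < d"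
  shows "conserved n Ps {a..b} \<and> conserved n Ps {c..d}"
proof -
  have "a < c" "b < d" using assms(3-5) by auto
  have "conserved_in P a b \<and> conserved_in P c d" if P: "P \<in> set Ps" for P
  proof -
    have "conserved_in P a c" "conserved_in P b d"
      using assms(1,2) P conserved_iff_conserved_in[OF \<open>a < c\<close>] conserved_iff_conserved_in[OF \<open>b < d\<close>]
      by auto
    then show ?thesis using conserved_in_overlap[OF signed_seq_member[OF P]] assms(3-5) by blast
  qed
  then show ?thesis using conserved_iff_conserved_in assms(3,5) by auto
qed

lemma conserved_subset_range:
  assumes "conserved n Ps {a..c}" "a < c"
  shows "{a..c} \<subseteq> {1..int n}"
proof -
  have P: "hd Ps \<in> set Ps" using nonempty by simp
  then obtain s t where w: "window (hd Ps) s t a c"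
    using assms conserved_iff_conserved_in unfolding conserved_in_def by blast
  then have "{a..c} = (\<lambda>i. \<bar>hd Ps ! i\<bar>) ` {s..t}" "t < length (hd Ps)" by (auto simp: window_def)
  then have "{a..c} \<subseteq> abs ` set (hd Ps)" by (auto intro: nth_mem)
  also have "\<dots> = {1..int n}" using perms P by (simp add: signed_perm_def)
  finally show ?thesis .
qed

lemma frontiers_frontier_set:
  assumes "conserved n Ps {a..c}" "a \<le> c"
  shows "frontiers n Ps {a..c} (frontier_set n Ps a c)"
proof -
  let ?F = "frontier_set n Ps a c"
  have "a \<in> ?F" "c \<in> ?F" "?F \<subseteq> {a..c}" using assms by (auto simp: frontier_set_def)
  then have fin: "finite ?F" and "Min ?F = a" "Max ?F = c"
    using finite_subset[OF \<open>?F \<subseteq> {a..c}\<close>] by (auto intro!: Min_eqI Max_eqI)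
  moreover have "conserved n Ps {f..g}" if "f \<in> ?F" "g \<in> ?F" "f < g" for f g
  proof (cases "f = a")
    case False
    then show ?thesis using that conserved_suffix[of a f g] unfolding frontier_set_def by auto
  qed (use that in \<open>auto simp: frontier_set_def\<close>)
  ultimately show ?thesis using \<open>a \<in> ?F\<close> unfolding frontiers_def by auto
qed

lemma max_frontiers_iff:
  assumes "conserved n Ps {a..c}" "a \<le> c"
  shows "max_frontiers n Ps {a..c} F \<longleftrightarrow> F = frontier_set n Ps a c"
  using frontiers_frontier_set[OF assms] frontiers_subset_frontier_set[OF _ assms(2)]
  unfolding max_frontiers_def by blast

lemma FI_eq_frontier_set:
  assumes "conserved n Ps {a..c}" "a \<le> c"
  shows "FI n Ps {a..c} = frontier_set n Ps a c"
  unfolding FI_def by (rule the_equality) (simp_all add: max_frontiers_iff[OF assms])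

lemma frontier_set_restrict:
  assumes "a \<in> frontier_set n Ps p q" "a \<le> c" "c \<le> q"
  shows "frontier_set n Ps a c = frontier_set n Ps p q \<inter> {a..c}"
proof (rule set_eqI)
  fix f
  have pa: "p \<le> a" "a = p \<or> conserved n Ps {p..a}" using assms(1) by (auto simp: frontier_set_def)
  show "f \<in> frontier_set n Ps a c \<longleftrightarrow> f \<in> frontier_set n Ps p q \<inter> {a..c}"
  proof (cases "a < f")
    case True
    have "conserved n Ps {a..f} \<longleftrightarrow> conserved n Ps {p..f}"
      using pa True conserved_trans[of p a f] conserved_suffix[of p a f] by (cases "a = p") auto
    then show ?thesis using True pa assms(3) unfolding frontier_set_def by auto
  qed (use pa assms in \<open>auto simp: frontier_set_def\<close>)
qed

lemma frontier_set_extend_left: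
  assumes "conserved n Ps {k..u}" "k < u" "f \<in> frontier_set n Ps u v"
  shows "f \<in> frontier_set n Ps k v"
  using assms conserved_trans[of k u f] unfolding frontier_set_def by (cases "f = u") auto

lemma spanning_strong_minimal:
  assumes J: "strong n Ps {p..q}" "a \<in> frontier_set n Ps p q" "c \<in> frontier_set n Ps p q" "a < c"
    and J': "strong n Ps J'" "{a..c} \<subseteq> J'"
  shows "{p..q} \<subseteq> J'"
proof (rule ccontr)
  assume "\<not> {p..q} \<subseteq> J'"
  obtain p' q' where J'_eq: "p' < q'" "J' = {p'..q'}" using strong_interval[OF J'(1)] by blast
  have ac: "p \<le> a" "c \<le> q" "a = p \<or> conserved n Ps {p..a}" "conserved n Ps {p..c}"
    using J(2-4) by (auto simp: frontier_set_def)
  have "p' \<le> a" "c \<le> q'" using J'(2) J'_eq J(4) by auto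
  then have "p \<le> p' \<and> q' \<le> q \<or> p' \<le> p \<and> q \<le> q'"
    using strong_nested[OF J(1), of p' q' a] J'_eq J'(1) ac J(4) unfolding strong_def by auto
  with \<open>\<not> {p..q} \<subseteq> J'\<close> J'_eq have "p < p' \<or> q' < q" by auto
  then obtain k l where "conserved n Ps {k..l}" "overlap {p'..q'} {k..l}"
  proof
    assume "p < p'"
    then show thesis
      using that[of p a] ac \<open>p' \<le> a\<close> \<open>c \<le> q'\<close> J(4) J'_eq overlap_intervals[of p' q' p a] by auto
  next
    assume "q' < q"
    have "conserved n Ps {p..q}" using J(1) unfolding strong_def by blast
    then have "conserved n Ps {c..q}"
      using conserved_suffix[of p c q] ac J(4) \<open>q' < q\<close> \<open>c \<le> q'\<close> by auto
    then show thesis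
      using that[of c q] \<open>p' \<le> a\<close> \<open>c \<le> q'\<close> \<open>q' < q\<close> J(4) overlap_intervals[of p' q' c q] by auto
  qed
  then show False using J'(1) J'_eq unfolding strong_def by blast
qed

lemma spanning_widens_over_overlap:
  assumes uv: "conserved n Ps {u..v}" "a \<in> frontier_set n Ps u v" "c \<in> frontier_set n Ps u v" "u < v"
    and kl: "conserved n Ps {k..l}" "k \<le> l" "overlap {u..v} {k..l}"
  shows "\<exists>u' v'. conserved n Ps {u'..v'} \<and> a \<in> frontier_set n Ps u' v' \<and>
    c \<in> frontier_set n Ps u' v' \<and> v - u < v' - u'"
proof -
  consider "u < k" "k \<le> v" "v < l" | "k < u" "u \<le> l" "l < v"
    using overlap_intervals[of u v k l] uv(4) kl(2,3) by auto
  then show ?thesis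
  proof cases
    case 1
    then have "conserved n Ps {v..l}" using conserved_overlap[of u v k l] uv(1) kl(1) by blast
    then have "conserved n Ps {u..l}" using conserved_trans[of u v l] uv(1,4) 1 by blast
    then show ?thesis
      using frontier_set_mono[of _ n Ps u v l] uv(2,3) 1 by (intro exI[of _ u] exI[of _ l]) auto
  next
    case 2
    then have ku: "conserved n Ps {k..u}" using conserved_overlap[of k l u v] uv(1) kl(1) by blast
    then have "conserved n Ps {k..v}" using conserved_trans[of k u v] uv(1,4) 2 by blast
    then show ?thesis
      using frontier_set_extend_left[OF ku \<open>k < u\<close>] uv(2,3) 2 by (intro exI[of _ k] exI[of _ v]) auto
  qed
qed

lemma ex_strong_spanning:
  assumes "conserved n Ps {a..c}" "a < c"
  shows "\<exists>u v. strong n Ps {u..v} \<and> a \<in> frontier_set n Ps u v \<and> c \<in> frontier_set n Ps u v"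
proof -
  define spanning where "spanning = (\<lambda>(u, v).
    conserved n Ps {u..v} \<and> a \<in> frontier_set n Ps u v \<and> c \<in> frontier_set n Ps u v)"
  define width where "width = (\<lambda>(u :: int, v :: int). nat (v - u))"
  have "width y < n" if "spanning y" for y
  proof -
    obtain u v where y: "y = (u, v)" by fastforce
    with that have "conserved n Ps {u..v}" "u \<le> a" "c \<le> v"
      by (auto simp: spanning_def frontier_set_def)
    then have "{u..v} \<subseteq> {1..int n}" using conserved_subset_range assms(2) by simp
    then show ?thesis using y \<open>u \<le> a\<close> \<open>c \<le> v\<close> assms(2) by (auto simp: width_def)
  qed
  moreover have "spanning (a, c)" using assms by (auto simp: spanning_def frontier_set_def)
  ultimately obtain y where "spanning y" and widest: "\<forall>y'. spanning y' \<longrightarrow> width y' \<le> width y"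
    using Lattices_Big.ex_has_greatest_nat[of spanning "(a, c)" width n] by blast
  then obtain u v where y: "y = (u, v)" "conserved n Ps {u..v}"
    "a \<in> frontier_set n Ps u v" "c \<in> frontier_set n Ps u v"
    by (auto simp: spanning_def)
  then have "u < v" using assms(2) by (auto simp: frontier_set_def)
  have "strong n Ps {u..v}"
    unfolding strong_def
  proof (intro conjI notI)
    show "2 \<le> card {u..v}" using \<open>u < v\<close> by simp
    assume "\<exists>K. conserved n Ps K \<and> overlap {u..v} K"
    then obtain k l where "conserved n Ps {k..l}" "k \<le> l" "overlap {u..v} {k..l}"
      using conserved_interval by blast
    then obtain u' v' where "spanning (u', v')" "v - u < v' - u'"
      using spanning_widens_over_overlap[OF y(2-4) \<open>u < v\<close>] unfolding spanning_def by fastforce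
    moreover have "width (u', v') \<le> width (u, v)" using widest y(1) calculation(1) by blast
    ultimately show False using \<open>u < v\<close> by (simp add: width_def)
  qed (use y in blast)
  then show ?thesis using y by blast
qed

lemma ex1_max_frontiers:
  assumes "conserved n Ps I" shows "\<exists>!F. max_frontiers n Ps I F"
proof -
  obtain a c where "a \<le> c" "I = {a..c}" using conserved_interval[OF assms] by blast
  then show ?thesis using max_frontiers_iff assms by auto
qed

lemma between_frontiers_iff:
  assumes "conserved n Ps {p..q}" "p \<le> q" "a < c"
  shows "between_frontiers n Ps {p..q} {a..c} \<longleftrightarrow>
    a \<in> frontier_set n Ps p q \<and> c \<in> frontier_set n Ps p q"
  using assms by (auto simp: FI_eq_frontier_set Icc_eq_Icc)

lemma ex_strong_between_frontiers:
  assumes "conserved n Ps {a..c}" "a < c"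
  shows "\<exists>J. strong n Ps J \<and> between_frontiers n Ps J {a..c}"
proof -
  obtain u v where uv: "strong n Ps {u..v}" "a \<in> frontier_set n Ps u v" "c \<in> frontier_set n Ps u v"
    using ex_strong_spanning[OF assms] by blast
  then have "conserved n Ps {u..v}" "u \<le> v" unfolding strong_def frontier_set_def by auto
  then show ?thesis using uv between_frontiers_iff assms(2) by blast
qed

lemma strong_between_frontiers:
  assumes J: "strong n Ps J" "between_frontiers n Ps J {a..c}"
    and I: "conserved n Ps {a..c}" "a < c"
  shows "FI n Ps {a..c} = FI n Ps J \<inter> {a..c} \<and> is_container n Ps {a..c} J"
proof -
  obtain p q where pq: "p < q" "J = {p..q}" using strong_interval[OF J(1)] by blast
  moreover have "conserved n Ps {p..q}" using J(1) pq(2) unfolding strong_def by blast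
  ultimately have fr: "a \<in> frontier_set n Ps p q" "c \<in> frontier_set n Ps p q"
    using between_frontiers_iff J(2) I(2) by auto
  then have "{a..c} \<subseteq> J" using pq(2) by (auto simp: frontier_set_def)
  have "FI n Ps {a..c} = FI n Ps J \<inter> {a..c}"
    using FI_eq_frontier_set frontier_set_restrict[OF fr(1)] I fr(2) pq \<open>conserved n Ps {p..q}\<close>
    by (auto simp: frontier_set_def)
  moreover have "is_container n Ps {a..c} J"
    unfolding is_container_def using spanning_strong_minimal[OF _ fr I(2)] J(1) pq(2) \<open>{a..c} \<subseteq> J\<close>
    by blast
  ultimately show ?thesis ..
qed

end

theorem theorem5:
  fixes n :: nat and Ps :: "int list list"
  assumes "n \<ge> 2"
    and "Ps \<noteq> []"
    and "hd Ps = [1..int n]"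
    and "\<forall>P\<in>set Ps. signed_perm n P \<and> hd P = 1 \<and> last P = int n"
  shows "(\<forall>I. conserved n Ps I \<longrightarrow> (\<exists>!F. max_frontiers n Ps I F)) \<and>
         (\<forall>I. conserved n Ps I \<and> card I \<ge> 2 \<longrightarrow>
            strong n Ps I \<or>
            (weak n Ps I \<and>
             (\<exists>!J. strong n Ps J \<and>
                 (\<exists>fi\<in>FI n Ps J. \<exists>fj\<in>FI n Ps J. fi < fj \<and> I = {fi..fj})) \<and>
             (\<forall>J. strong n Ps J \<and>
                 (\<exists>fi\<in>FI n Ps J. \<exists>fj\<in>FI n Ps J. fi < fj \<and> I = {fi..fj}) \<longrightarrow>
                 FI n Ps I = FI n Ps J \<inter> I \<and> is_container n Ps I J)))"
proof -
  interpret perm_family n Ps using assms(2,4) by unfold_locales auto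
  have weak_case: "weak n Ps I \<and> (\<exists>!J. strong n Ps J \<and> between_frontiers n Ps J I) \<and>
      (\<forall>J. strong n Ps J \<and> between_frontiers n Ps J I \<longrightarrow>
         FI n Ps I = FI n Ps J \<inter> I \<and> is_container n Ps I J)"
    if I: "conserved n Ps I" "2 \<le> card I" "\<not> strong n Ps I" for I
  proof -
    obtain a c where ac: "a < c" "I = {a..c}" using conserved_nontrivial_interval[OF I(1,2)] by blast
    have facts: "FI n Ps I = FI n Ps J \<inter> I \<and> is_container n Ps I J"
      if "strong n Ps J \<and> between_frontiers n Ps J I" for J
      using strong_between_frontiers[of J a c] that I(1) ac by simp
    obtain J0 where J0: "strong n Ps J0 \<and> between_frontiers n Ps J0 I"
      using ex_strong_between_frontiers[of a c] I(1) ac by auto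
    have "J = J0" if "strong n Ps J \<and> between_frontiers n Ps J I" for J
      using is_container_unique facts[OF that] facts[OF J0] by blast
    with J0 have "\<exists>!J. strong n Ps J \<and> between_frontiers n Ps J I" by (rule ex1I)
    moreover have "weak n Ps I" using I unfolding weak_def by simp
    ultimately show ?thesis using facts by simp
  qed
  show ?thesis
  proof (intro conjI allI impI)
    show "\<exists>!F. max_frontiers n Ps I F" if "conserved n Ps I" for I
      using ex1_max_frontiers[OF that] .
  next
    fix I assume "conserved n Ps I \<and> 2 \<le> card I"
    then show "strong n Ps I \<or> weak n Ps I \<and> (\<exists>!J. strong n Ps J \<and> between_frontiers n Ps J I) \<and>
      (\<forall>J. strong n Ps J \<and> between_frontiers n Ps J I \<longrightarrow>
         FI n Ps I = FI n Ps J \<inter> I \<and> is_container n Ps I J)"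
      using weak_case[of I] by blast
  qed
qed

end
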